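(* Let $X\in\mathbb{R}^{m\times n}$, $\lambda>0$, and let $f:\mathbb{R}^{m\times n}\to\mathbb{R}$ be an arbitrary function. Consider the original R-PCA problem $$\min_{A,E\in\mathbb{R}^{m\times n}} \operatorname{rank}(A)+\lambda f(E)\quad\text{s.t.}\quad X=A+E, \tag{P}$$ and the original R-LRR problem $$\min_{Z\in\mathbb{R}^{n\times n},\,E\in\mathbb{R}^{m\times n}} \operatorname{rank}(Z)+\lambda f(E)\quad\text{s.t.}\quad X-E=(X-E)Z. \tag{Q}$$ (i) Let $(A^*,E^* )$ be any minimizer of (P) and let $A^*=U_{A^*}\Sigma_{A^*}V_{A^*}^T$ be its skinny SVD. Then for every matrix $S\in\mathbb{R}^{n\times \operatorname{rank}(A^* )}$ with $V_{A^*}^TS=0$, the pair $\big((A^* )^\dagger A^*+SV_{A^*}^T,\;E^*\big)$ is an optimal solution of (Q). (ii) Conversely, if $(Z^*,E^* )$ is an optimal solution of (Q), then $(X-E^*,E^* )$ is a minimizer of (P).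
   Context: $M^\dagger$ denotes the Moore–Penrose pseudo-inverse of $M$. The skinny SVD of a matrix $A$ of rank $r$ is $A=U_A\Sigma_AV_A^T$ with $U_A,V_A$ having $r$ orthonormal columns and $\Sigma_A$ an $r\times r$ diagonal matrix with positive diagonal entries. *)

theory Defs
  imports "Jordan_Normal_Form.DL_Rank"
begin

definition mrank :: "real mat \<Rightarrow> nat" where
  "mrank A = vec_space.rank (dim_row A) A"

definition is_pinv :: "real mat \<Rightarrow> real mat \<Rightarrow> bool" where
  "is_pinv A B \<longleftrightarrow> B \<in> carrier_mat (dim_col A) (dim_row A) \<and>
     A * B * A = A \<and> B * A * B = B \<and>
     transpose_mat (A * B) = A * B \<and> transpose_mat (B * A) = B * A"

definition pinv :: "real mat \<Rightarrow> real mat" where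
  "pinv A = (THE B. is_pinv A B)"

definition skinny_svd :: "nat \<Rightarrow> nat \<Rightarrow> real mat \<Rightarrow> real mat \<Rightarrow> real mat \<Rightarrow> real mat \<Rightarrow> bool" where
  "skinny_svd m n A U Sg V \<longleftrightarrow> (let r = mrank A in
     U \<in> carrier_mat m r \<and> Sg \<in> carrier_mat r r \<and> V \<in> carrier_mat n r \<and>
     transpose_mat U * U = 1\<^sub>m r \<and> transpose_mat V * V = 1\<^sub>m r \<and>
     (\<forall>i<r. \<forall>j<r. i \<noteq> j \<longrightarrow> Sg $$ (i, j) = 0) \<and> (\<forall>i<r. Sg $$ (i, i) > 0) \<and>
     A = U * Sg * transpose_mat V)"

definition rpca_feasible :: "nat \<Rightarrow> nat \<Rightarrow> real mat \<Rightarrow> real mat \<Rightarrow> real mat \<Rightarrow> bool" where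
  "rpca_feasible m n X A E \<longleftrightarrow> A \<in> carrier_mat m n \<and> E \<in> carrier_mat m n \<and> X = A + E"

definition rpca_opt :: "nat \<Rightarrow> nat \<Rightarrow> real mat \<Rightarrow> real \<Rightarrow> (real mat \<Rightarrow> real) \<Rightarrow> real mat \<Rightarrow> real mat \<Rightarrow> bool" where
  "rpca_opt m n X lam f A E \<longleftrightarrow> rpca_feasible m n X A E \<and>
     (\<forall>A' E'. rpca_feasible m n X A' E' \<longrightarrow>
        real (mrank A) + lam * f E \<le> real (mrank A') + lam * f E')"

definition rlrr_feasible :: "nat \<Rightarrow> nat \<Rightarrow> real mat \<Rightarrow> real mat \<Rightarrow> real mat \<Rightarrow> bool" where
  "rlrr_feasible m n X Z E \<longleftrightarrow> Z \<in> carrier_mat n n \<and> E \<in> carrier_mat m n \<and> X - E = (X - E) * Z"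

definition rlrr_opt :: "nat \<Rightarrow> nat \<Rightarrow> real mat \<Rightarrow> real \<Rightarrow> (real mat \<Rightarrow> real) \<Rightarrow> real mat \<Rightarrow> real mat \<Rightarrow> bool" where
  "rlrr_opt m n X lam f Z E \<longleftrightarrow> rlrr_feasible m n X Z E \<and>
     (\<forall>Z' E'. rlrr_feasible m n X Z' E' \<longrightarrow>
        real (mrank Z) + lam * f E \<le> real (mrank Z') + lam * f E')"

end

theory Submission
  imports Defs
begin

text \<open>Both problems carry the same loss term \<open>\<lambda> f(E)\<close>, and their rank terms can be traded
  against each other. A feasible pair \<open>(Z, E)\<close> of (Q) yields the feasible pair \<open>(X - E, E)\<close> of (P),
  and \<open>rank (X - E) = rank ((X - E) Z) \<le> rank Z\<close>. Conversely, a feasible pair \<open>(A, E)\<close> of (P)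
  yields a feasible pair \<open>(Z, E)\<close> of (Q) with \<open>rank Z \<le> rank A\<close>: factor \<open>A = (A P) C\<close> through
  \<open>rank A\<close> of its own columns and take \<open>Z = P C\<close>. Hence minimizers transfer in both directions.
  For (i) it remains to see that \<open>Z = A\<^sup>\<dagger> A + S V\<^sup>T\<close> is such a matrix: \<open>A S V\<^sup>T = U \<Sigma> (V\<^sup>T S) V\<^sup>T = 0\<close>
  gives \<open>A Z = A\<close>, and \<open>Z = (A\<^sup>\<dagger> U \<Sigma> + S) V\<^sup>T\<close> has rank at most \<open>rank A\<close>. The pseudo-inverse exists
  because the skinny SVD provides it, namely \<open>V \<Sigma>\<^sup>-\<^sup>1 U\<^sup>T\<close>.\<close>

lemma mult_unit_vec_eq_col:
  assumes "(A :: 'a :: semiring_1 mat) \<in> carrier_mat n a" "j < a"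
  shows "A *\<^sub>v unit_vec a j = col A j"
proof (rule eq_vecI)
  fix i assume "i < dim_vec (col A j)"
  hence i: "i < n" using assms by simp
  have "(A *\<^sub>v unit_vec a j) $ i = row A i \<bullet> unit_vec a j" using i assms by simp
  also have "\<dots> = row A i $ j" by (rule scalar_prod_right_unit) (use assms in simp)
  finally show "(A *\<^sub>v unit_vec a j) $ i = col A j $ i" using i assms by simp
qed (use assms in simp)

context vec_space begin

lemma span_eq_mat_of_cols_mult:
  assumes "set ts \<subseteq> carrier_vec n" "v \<in> span (set ts)"
  shows "\<exists>c. v = mat_of_cols n ts *\<^sub>v vec (length ts) c"
proof -
  have "v \<in> span_list ts" using span_list_as_span[OF assms(1)] assms(2) by simp
  then obtain c where "v = lincomb_list c ts" unfolding span_list_def by auto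
  moreover have "\<forall>w\<in>set ts. dim_vec w = n" using assms(1) by auto
  ultimately show ?thesis using lincomb_list_as_mat_mult by auto
qed

lemma mult_mat_vec_in_span_cols:
  assumes B: "B \<in> carrier_mat n k" and w: "w \<in> carrier_vec k"
  shows "B *\<^sub>v w \<in> span (set (cols B))"
proof -
  have cs: "set (cols B) \<subseteq> carrier_vec n" using B cols_dim by blast
  have "vec (length (cols B)) (\<lambda>i. w $ i) = w" using B w by (intro eq_vecI) auto
  moreover have "mat_of_cols n (cols B) = B" using B by auto
  moreover have "\<forall>x\<in>set (cols B). dim_vec x = n" using cs by auto
  ultimately have "B *\<^sub>v w = lincomb_list (\<lambda>i. w $ i) (cols B)"
    using lincomb_list_as_mat_mult[of "cols B" "\<lambda>i. w $ i"] by simp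
  hence "B *\<^sub>v w \<in> span_list (cols B)" unfolding span_list_def by auto
  thus ?thesis using span_list_as_span[OF cs] by simp
qed

lemma rank_le_if_cols_in_span:
  assumes A: "A \<in> carrier_mat n a" and B: "B \<in> carrier_mat n b"
    and sub: "set (cols A) \<subseteq> span (set (cols B))"
  shows "rank A \<le> rank B"
proof -
  obtain S where S: "maximal S (\<lambda>T. T \<subseteq> set (cols A) \<and> lin_indpt T)"
    using maximal_exists[of "(\<lambda>T. T \<subseteq> set (cols A) \<and> lin_indpt T)" "card (set (cols A))" "{}"]
    by (meson List.finite_set card_mono empty_iff empty_subsetI finite_lin_indpt2 rev_finite_subset)
  have SA: "S \<subseteq> set (cols A)" "lin_indpt S" using S unfolding maximal_def by auto
  define W where "W = span (set (cols B))"
  have cs: "set (cols B) \<subseteq> carrier_vec n" using B cols_dim by blast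
  have sm: "submodule class_ring W V" unfolding W_def using cs span_is_submodule by simp
  have vsW: "vectorspace class_ring (vs W)"
    unfolding W_def using cs span_is_subspace subspace_def subspace_is_vs by simp
  have fd: "vectorspace.fin_dim class_ring (vs W)" unfolding W_def using fin_dim_span_cols[OF B] .
  have SW: "S \<subseteq> W" using SA sub W_def by auto
  have li: "\<not> module.lin_dep class_ring (vs W) S"
    using module.span_li_not_depend(2)[OF conjunct1[OF vec_vs[unfolded vectorspace_def]] SW sm] SA(2)
    by simp
  have "card S \<le> vectorspace.dim class_ring (vs W)"
    using vectorspace.li_le_dim(2)[OF vsW fd _ li] SW by simp
  thus ?thesis using rank_card_indpt[OF A S] unfolding rank_def W_def by simp
qed

lemma rank_mat_mult_le_left:
  assumes B: "B \<in> carrier_mat n b" and C: "C \<in> carrier_mat b c"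
  shows "rank (B * C) \<le> rank B"
proof (rule rank_le_if_cols_in_span[OF _ B])
  show "B * C \<in> carrier_mat n c" using B C by simp
  show "set (cols (B * C)) \<subseteq> span (set (cols B))"
  proof
    fix v assume "v \<in> set (cols (B * C))"
    then obtain j where j: "j < c" "v = col (B * C) j" using B C unfolding cols_def by auto
    have "v = B *\<^sub>v col C j" using j(2) col_mult2[OF B C j(1)] by (simp only:)
    thus "v \<in> span (set (cols B))" using mult_mat_vec_in_span_cols[OF B] C j by simp
  qed
qed

lemma maximal_indpt_cols_span_col:
  assumes A: "A \<in> carrier_mat n a" and S: "maximal S (\<lambda>T. T \<subseteq> set (cols A) \<and> lin_indpt T)"
    and j: "j < a"
  shows "col A j \<in> span S"
proof (rule ccontr)
  assume ns: "col A j \<notin> span S"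
  have SA: "S \<subseteq> set (cols A)" "lin_indpt S" using S unfolding maximal_def by auto
  have cA: "set (cols A) \<subseteq> carrier_vec n" using A cols_dim by blast
  have cj: "col A j \<in> set (cols A)" using A j unfolding cols_def by auto
  have SC: "S \<subseteq> carrier_vec n" using SA cA by auto
  have nin: "col A j \<notin> S" using ns SC in_own_span by auto
  have "\<not> lin_dep (S \<union> {col A j})"
    using vectorspace.lin_dep_iff_in_span[OF vec_vs _ SA(2) _ nin] SC ns cj cA by auto
  hence "S \<union> {col A j} = S" using S SA cj unfolding maximal_def by blast
  thus False using nin by auto
qed

text \<open>The matrix \<open>A P\<close> consists of \<open>rank A\<close> linearly independent columns of \<open>A\<close>, and \<open>C\<close>
  expresses every column of \<open>A\<close> in terms of them.\<close>

lemma rank_factorization_through_cols: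
  assumes A: "A \<in> carrier_mat n a"
  shows "\<exists>P C. P \<in> carrier_mat a (rank A) \<and> C \<in> carrier_mat (rank A) a \<and> A * P * C = A"
proof -
  obtain S where S: "maximal S (\<lambda>T. T \<subseteq> set (cols A) \<and> lin_indpt T)"
    using maximal_exists[of "(\<lambda>T. T \<subseteq> set (cols A) \<and> lin_indpt T)" "card (set (cols A))" "{}"]
    by (meson List.finite_set card_mono empty_iff empty_subsetI finite_lin_indpt2 rev_finite_subset)
  have SA: "S \<subseteq> set (cols A)" using S unfolding maximal_def by auto
  obtain ts where ts: "set ts = S" "distinct ts"
    using finite_distinct_list[OF finite_subset[OF SA List.finite_set]] by blast
  define r where "r = rank A"
  have lts: "length ts = r" using ts rank_card_indpt[OF A S] r_def distinct_card by metis
  have tsc: "set ts \<subseteq> carrier_vec n" using ts SA A cols_dim by blast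
  have "\<exists>j. j < a \<and> col A j = t" if "t \<in> S" for t
    using that SA A unfolding cols_def by fastforce
  then obtain idx where idx: "\<And>t. t \<in> S \<Longrightarrow> idx t < a \<and> col A (idx t) = t" by metis
  define P :: "'a mat" where "P = mat a r (\<lambda>(i,k). if i = idx (ts ! k) then 1 else 0)"
  have P: "P \<in> carrier_mat a r" unfolding P_def by simp
  have AP: "A * P = mat_of_cols n ts"
  proof (rule mat_col_eqI)
    fix k assume "k < dim_col (mat_of_cols n ts)"
    hence k: "k < r" using lts by simp
    have tk: "ts ! k \<in> S" using ts k lts by auto
    have "col P k = unit_vec a (idx (ts ! k))"
      unfolding P_def using k idx[OF tk] by (intro eq_vecI) auto
    hence "col (A * P) k = A *\<^sub>v unit_vec a (idx (ts ! k))" using col_mult2[OF A P k] by (simp only:)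
    also have "\<dots> = ts ! k" using mult_unit_vec_eq_col[OF A] idx[OF tk] by simp
    also have "\<dots> = col (mat_of_cols n ts) k" using k lts tsc
      by (metis col_mat_of_cols carrier_vecD nth_mem subsetD)
    finally show "col (A * P) k = col (mat_of_cols n ts) k" .
  qed (use A P lts in auto)
  have "\<exists>c. col A j = mat_of_cols n ts *\<^sub>v vec r c" if "j < a" for j
    using span_eq_mat_of_cols_mult[OF tsc] maximal_indpt_cols_span_col[OF A S that] ts lts by auto
  then obtain cf where cf: "\<And>j. j < a \<Longrightarrow> col A j = mat_of_cols n ts *\<^sub>v vec r (cf j)" by metis
  define C where "C = mat r a (\<lambda>(k,j). cf j k)"
  have C: "C \<in> carrier_mat r a" unfolding C_def by simp
  have "A * P * C = A"
  proof (rule mat_col_eqI)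
    fix j assume "j < dim_col A"
    hence j: "j < a" using A by simp
    have "col C j = vec r (cf j)" unfolding C_def using j by (intro eq_vecI) auto
    moreover have "col (mat_of_cols n ts * C) j = mat_of_cols n ts *\<^sub>v col C j"
      by (rule col_mult2[of _ n r C a j]) (use lts C j in auto)
    ultimately show "col (A * P * C) j = col A j" using AP cf[OF j] by simp
  qed (use A P C in auto)
  thus ?thesis using P C r_def by blast
qed

end

lemma rank_mat_mult_le_right:
  assumes B: "(B :: 'a :: field mat) \<in> carrier_mat m n" and Z: "Z \<in> carrier_mat n p"
  shows "vec_space.rank m (B * Z) \<le> vec_space.rank n Z"
proof -
  obtain P C where P: "P \<in> carrier_mat p (vec_space.rank n Z)"
    and C: "C \<in> carrier_mat (vec_space.rank n Z) p" and e: "Z * P * C = Z"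
    using vec_space.rank_factorization_through_cols[OF Z] by blast
  have BZP: "B * Z * P \<in> carrier_mat m (vec_space.rank n Z)" using B Z P by simp
  have BZ: "B * Z \<in> carrier_mat m p" using B Z by simp
  have "B * Z * P * C = B * Z * (P * C)" by (rule assoc_mult_mat[OF BZ P C])
  also have "\<dots> = B * (Z * (P * C))" using B Z mult_carrier_mat[OF P C] by (rule assoc_mult_mat)
  also have "Z * (P * C) = Z * P * C" using Z P C by (rule assoc_mult_mat[symmetric])
  finally have "B * Z = B * Z * P * C" using e by simp
  hence "vec_space.rank m (B * Z) = vec_space.rank m (B * Z * P * C)" by simp
  also have "\<dots> \<le> vec_space.rank m (B * Z * P)" by (rule vec_space.rank_mat_mult_le_left[OF BZP C])
  also have "\<dots> \<le> vec_space.rank n Z" by (rule vec_space.rank_le_nc[OF BZP])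
  finally show ?thesis .
qed

lemma mrank_carrier: "A \<in> carrier_mat m n \<Longrightarrow> mrank A = vec_space.rank m A"
  unfolding mrank_def by simp

lemma mrank_mult_le_right:
  assumes "B \<in> carrier_mat m n" "Z \<in> carrier_mat n p"
  shows "mrank (B * Z) \<le> mrank Z"
  using rank_mat_mult_le_right[OF assms] mrank_carrier[OF mult_carrier_mat[OF assms]]
    mrank_carrier[OF assms(2)] by simp

lemma mrank_mult_le_inner_dim:
  assumes B: "B \<in> carrier_mat m k" and C: "C \<in> carrier_mat k p"
  shows "mrank (B * C) \<le> k"
proof -
  have "mrank (B * C) \<le> vec_space.rank m B"
    using vec_space.rank_mat_mult_le_left[OF B C] mrank_carrier[OF mult_carrier_mat[OF B C]] by simp
  also have "\<dots> \<le> k" by (rule vec_space.rank_le_nc[OF B])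
  finally show ?thesis .
qed

lemma exists_right_identity_mrank_le:
  assumes A: "A \<in> carrier_mat m n"
  shows "\<exists>Z. Z \<in> carrier_mat n n \<and> A * Z = A \<and> mrank Z \<le> mrank A"
proof -
  obtain P C where P: "P \<in> carrier_mat n (mrank A)" and C: "C \<in> carrier_mat (mrank A) n"
    and e: "A * P * C = A"
    using vec_space.rank_factorization_through_cols[OF A] A by (auto simp: mrank_carrier)
  have "A * (P * C) = A" using e A P C by (simp add: assoc_mult_mat)
  thus ?thesis using P C mrank_mult_le_inner_dim[OF P C] by (intro exI[of _ "P * C"]) simp
qed

lemma is_pinv_mult_right_eq:
  assumes A: "A \<in> carrier_mat m n" and B: "is_pinv A B" and C: "is_pinv A C"
  shows "A * B = A * C"
proof -
  have Bc: "B \<in> carrier_mat n m" and Cc: "C \<in> carrier_mat n m"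
    using A B C unfolding is_pinv_def by auto
  have B3: "transpose_mat (A * B) = A * B" and B1: "A * B * A = A"
    using B unfolding is_pinv_def by auto
  have C3: "transpose_mat (A * C) = A * C" and C1: "A * C * A = A"
    using C unfolding is_pinv_def by auto
  have AC: "A * C \<in> carrier_mat m m" using A Cc by simp
  have tA: "transpose_mat A = transpose_mat A * (A * C)"
    using transpose_mult[OF AC A] C1 C3 by simp
  have BA: "transpose_mat B * transpose_mat A = A * B" using B3 transpose_mult[OF A Bc] by simp
  have "A * B = transpose_mat B * (transpose_mat A * (A * C))" using tA BA by simp
  also have "\<dots> = A * B * (A * C)"
    using assoc_mult_mat[of "transpose_mat B" m n "transpose_mat A" m "A * C" m] Bc A AC BA by simp
  also have "\<dots> = A * B * A * C" using assoc_mult_mat[of "A * B" m m A n C m] A Bc Cc by simp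
  finally show ?thesis using B1 by simp
qed

lemma is_pinv_mult_left_eq:
  assumes A: "A \<in> carrier_mat m n" and B: "is_pinv A B" and C: "is_pinv A C"
  shows "B * A = C * A"
proof -
  have Bc: "B \<in> carrier_mat n m" and Cc: "C \<in> carrier_mat n m"
    using A B C unfolding is_pinv_def by auto
  have B4: "transpose_mat (B * A) = B * A" and B1: "A * B * A = A"
    using B unfolding is_pinv_def by auto
  have C4: "transpose_mat (C * A) = C * A" and C1: "A * C * A = A"
    using C unfolding is_pinv_def by auto
  have CA: "C * A \<in> carrier_mat n n" using A Cc by simp
  have "A * (C * A) = A" using C1 assoc_mult_mat[OF A Cc A] by simp
  hence tA: "transpose_mat A = (C * A) * transpose_mat A"
    using transpose_mult[OF A CA] C4 by metis
  have AB: "transpose_mat A * transpose_mat B = B * A" using B4 transpose_mult[OF Bc A] by simp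
  have "B * A = ((C * A) * transpose_mat A) * transpose_mat B" using tA AB by simp
  also have "\<dots> = C * A * (B * A)"
    using assoc_mult_mat[of "C * A" n n "transpose_mat A" m "transpose_mat B" n] Bc A CA AB by simp
  also have "\<dots> = C * (A * B * A)"
    using assoc_mult_mat[of C n m A n "B * A" n] assoc_mult_mat[OF A Bc A] A Bc Cc by simp
  finally show ?thesis using B1 by simp
qed

lemma is_pinv_unique:
  assumes B: "is_pinv A B" and C: "is_pinv A C"
  shows "B = C"
proof -
  define m n where "m = dim_row A" and "n = dim_col A"
  have A: "A \<in> carrier_mat m n" unfolding m_def n_def by auto
  have Bc: "B \<in> carrier_mat n m" and Cc: "C \<in> carrier_mat n m"
    using B C unfolding is_pinv_def m_def n_def by auto
  have "B = B * (A * B)" using B assoc_mult_mat[OF Bc A Bc] unfolding is_pinv_def by simp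
  also have "\<dots> = (B * A) * C" using is_pinv_mult_right_eq[OF A B C] assoc_mult_mat[OF Bc A Cc] by simp
  also have "\<dots> = C" using is_pinv_mult_left_eq[OF A B C] C unfolding is_pinv_def by simp
  finally show ?thesis .
qed

lemma pinv_eqI: "is_pinv A B \<Longrightarrow> pinv A = B"
  unfolding pinv_def using is_pinv_unique by blast

lemma mult_mat_cancel_middle:
  assumes P: "P \<in> carrier_mat a k" and Q: "Q \<in> carrier_mat k c" and R: "R \<in> carrier_mat c k"
    and W: "W \<in> carrier_mat k b" and QR: "Q * R = 1\<^sub>m k"
  shows "P * Q * (R * W) = (P :: 'a :: semiring_1 mat) * W"
proof -
  have "P * Q * (R * W) = P * (Q * (R * W))" using assoc_mult_mat[OF P Q mult_carrier_mat[OF R W]] .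
  also have "Q * (R * W) = (Q * R) * W" using assoc_mult_mat[OF Q R W] by simp
  finally show ?thesis using QR W by simp
qed

lemma diagonal_mat_invertible:
  fixes Sg :: "'a :: field mat"
  assumes Sg: "Sg \<in> carrier_mat r r"
    and off: "\<forall>i<r. \<forall>j<r. i \<noteq> j \<longrightarrow> Sg $$ (i, j) = 0" and nz: "\<forall>i<r. Sg $$ (i, i) \<noteq> 0"
  shows "\<exists>D. D \<in> carrier_mat r r \<and> Sg * D = 1\<^sub>m r \<and> D * Sg = 1\<^sub>m r"
proof -
  define D :: "'a mat" where "D = mat r r (\<lambda>(i,j). if i = j then 1 / Sg $$ (i,i) else 0)"
  have D: "D \<in> carrier_mat r r" unfolding D_def by simp
  have SD: "Sg * D = 1\<^sub>m r"
  proof (rule eq_matI)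
    fix i j assume i: "i < dim_row (1\<^sub>m r)" and j: "j < dim_col (1\<^sub>m r)"
    have "(Sg * D) $$ (i, j) = (\<Sum>k\<in>{0..<r}. Sg $$ (i, k) * D $$ (k, j))"
      using i j Sg D by (simp add: scalar_prod_def)
    also have "\<dots> = (\<Sum>k\<in>{0..<r}. if k = j then Sg $$ (i, j) / Sg $$ (j,j) else 0)"
      using j unfolding D_def by (intro sum.cong) auto
    also have "\<dots> = 1\<^sub>m r $$ (i, j)"
      using i j off nz by (cases "i = j") auto
    finally show "(Sg * D) $$ (i, j) = 1\<^sub>m r $$ (i, j)" .
  qed (use Sg D in auto)
  thus ?thesis using D mat_mult_left_right_inverse[OF Sg D SD] by blast
qed

lemma skinny_svd_is_pinv:
  assumes A: "A \<in> carrier_mat m n" and svd: "skinny_svd m n A U Sg V"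
  shows "is_pinv A (pinv A)"
proof -
  define r where "r = mrank A"
  have U: "U \<in> carrier_mat m r" and Sg: "Sg \<in> carrier_mat r r" and V: "V \<in> carrier_mat n r"
    and UU: "transpose_mat U * U = 1\<^sub>m r" and VV: "transpose_mat V * V = 1\<^sub>m r"
    and off: "\<forall>i<r. \<forall>j<r. i \<noteq> j \<longrightarrow> Sg $$ (i, j) = 0" and pos: "\<forall>i<r. Sg $$ (i, i) > 0"
    and Aeq: "A = U * Sg * transpose_mat V"
    using svd unfolding skinny_svd_def r_def Let_def by auto
  obtain D where D: "D \<in> carrier_mat r r" and SD: "Sg * D = 1\<^sub>m r" and DS: "D * Sg = 1\<^sub>m r"
    using diagonal_mat_invertible[OF Sg off] pos by force
  have tU: "transpose_mat U \<in> carrier_mat r m" and tV: "transpose_mat V \<in> carrier_mat r n"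
    using U V by auto
  have DtU: "D * transpose_mat U \<in> carrier_mat r m" using D tU by simp
  have StV: "Sg * transpose_mat V \<in> carrier_mat r n" using Sg tV by simp
  define B where "B = V * (D * transpose_mat U)"
  have Bc: "B \<in> carrier_mat n m" unfolding B_def using V DtU by simp
  have A2: "A = U * (Sg * transpose_mat V)" using Aeq assoc_mult_mat[OF U Sg tV] by simp
  have B2: "B = V * D * transpose_mat U" unfolding B_def using assoc_mult_mat[OF V D tU] by simp
  have AB: "A * B = U * transpose_mat U"
  proof -
    have "A * B = U * Sg * transpose_mat V * (V * (D * transpose_mat U))" using Aeq B_def by simp
    also have "\<dots> = U * Sg * (D * transpose_mat U)"
      by (rule mult_mat_cancel_middle[OF mult_carrier_mat[OF U Sg] tV V DtU VV])
    also have "\<dots> = U * transpose_mat U" by (rule mult_mat_cancel_middle[OF U Sg D tU SD])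
    finally show ?thesis .
  qed
  have BA: "B * A = V * transpose_mat V"
  proof -
    have "B * A = V * D * transpose_mat U * (U * (Sg * transpose_mat V))" using A2 B2 by simp
    also have "\<dots> = V * D * (Sg * transpose_mat V)"
      by (rule mult_mat_cancel_middle[OF mult_carrier_mat[OF V D] tU U StV UU])
    also have "\<dots> = V * transpose_mat V" by (rule mult_mat_cancel_middle[OF V D Sg tV DS])
    finally show ?thesis .
  qed
  have "A * B * A = A"
    using mult_mat_cancel_middle[OF U tU U StV UU] AB A2 by simp
  moreover have "B * A * B = B"
    using mult_mat_cancel_middle[OF V tV V DtU VV] BA B_def by simp
  moreover have "transpose_mat (A * B) = A * B" unfolding AB using transpose_mult[OF U tU] by simp
  moreover have "transpose_mat (B * A) = B * A" unfolding BA using transpose_mult[OF V tV] by simp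
  ultimately have "is_pinv A B" unfolding is_pinv_def using Bc A by auto
  thus ?thesis using pinv_eqI by simp
qed

lemma rlrr_feasible_imp_rpca_feasible:
  assumes X: "X \<in> carrier_mat m n" and feas: "rlrr_feasible m n X Z E"
  shows "rpca_feasible m n X (X - E) E \<and> mrank (X - E) \<le> mrank Z"
proof -
  have Z: "Z \<in> carrier_mat n n" and E: "E \<in> carrier_mat m n" and fix_Z: "X - E = (X - E) * Z"
    using feas unfolding rlrr_feasible_def by auto
  have XE: "X - E \<in> carrier_mat m n" using minus_carrier_mat[OF E] .
  have "X = X - E + E" using X E by (auto intro!: eq_matI)
  hence "rpca_feasible m n X (X - E) E" unfolding rpca_feasible_def using XE E by simp
  moreover have "mrank (X - E) \<le> mrank Z" using mrank_mult_le_right[OF XE Z] fix_Z by simp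
  ultimately show ?thesis ..
qed

lemma rpca_feasible_imp_rlrr_feasible:
  assumes "rpca_feasible m n X A E"
  shows "\<exists>Z. rlrr_feasible m n X Z E \<and> mrank Z \<le> mrank A"
proof -
  have A: "A \<in> carrier_mat m n" and E: "E \<in> carrier_mat m n" and X: "X = A + E"
    using assms unfolding rpca_feasible_def by auto
  have "X - E = A" using X A E by (auto intro!: eq_matI)
  moreover obtain Z where "Z \<in> carrier_mat n n" "A * Z = A" "mrank Z \<le> mrank A"
    using exists_right_identity_mrank_le[OF A] by blast
  ultimately show ?thesis unfolding rlrr_feasible_def using E by auto
qed

lemma rpca_opt_if_rlrr_opt:
  assumes X: "X \<in> carrier_mat m n" and opt: "rlrr_opt m n X lam f Z E"
  shows "rpca_opt m n X lam f (X - E) E"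
  unfolding rpca_opt_def
proof (intro conjI allI impI)
  have feas: "rlrr_feasible m n X Z E" using opt unfolding rlrr_opt_def by simp
  show "rpca_feasible m n X (X - E) E" using rlrr_feasible_imp_rpca_feasible[OF X feas] by simp
  fix A' E' assume "rpca_feasible m n X A' E'"
  then obtain Z' where "rlrr_feasible m n X Z' E'" "mrank Z' \<le> mrank A'"
    using rpca_feasible_imp_rlrr_feasible by blast
  thus "real (mrank (X - E)) + lam * f E \<le> real (mrank A') + lam * f E'"
    using opt rlrr_feasible_imp_rpca_feasible[OF X feas] unfolding rlrr_opt_def by force
qed

lemma skinny_svd_rlrr_feasible:
  assumes feas: "rpca_feasible m n X A E" and svd: "skinny_svd m n A U Sg V"
    and S: "S \<in> carrier_mat n (mrank A)" and VS: "transpose_mat V * S = 0\<^sub>m (mrank A) (mrank A)"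
  shows "rlrr_feasible m n X (pinv A * A + S * transpose_mat V) E
    \<and> mrank (pinv A * A + S * transpose_mat V) \<le> mrank A"
proof -
  define r where "r = mrank A"
  define Z where "Z = pinv A * A + S * transpose_mat V"
  have A: "A \<in> carrier_mat m n" and E: "E \<in> carrier_mat m n" and X: "X = A + E"
    using feas unfolding rpca_feasible_def by auto
  have U: "U \<in> carrier_mat m r" and Sg: "Sg \<in> carrier_mat r r" and V: "V \<in> carrier_mat n r"
    and Aeq: "A = U * Sg * transpose_mat V"
    using svd unfolding skinny_svd_def r_def Let_def by auto
  have S: "S \<in> carrier_mat n r" and VS: "transpose_mat V * S = 0\<^sub>m r r" using S VS r_def by auto
  have tV: "transpose_mat V \<in> carrier_mat r n" using V by simp
  have US: "U * Sg \<in> carrier_mat m r" using U Sg by simp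
  have pA: "is_pinv A (pinv A)" by (rule skinny_svd_is_pinv[OF A svd])
  have pAc: "pinv A \<in> carrier_mat n m" using pA A unfolding is_pinv_def by auto
  have W: "pinv A * (U * Sg) + S \<in> carrier_mat n r" using pAc US S by simp
  have "pinv A * A = pinv A * (U * Sg) * transpose_mat V"
    using Aeq assoc_mult_mat[OF pAc US tV] by simp
  hence Zeq: "Z = (pinv A * (U * Sg) + S) * transpose_mat V"
    unfolding Z_def using add_mult_distrib_mat[OF mult_carrier_mat[OF pAc US] S tV] by simp
  have Zc: "Z \<in> carrier_mat n n" using Zeq W tV by simp
  have "A * (S * transpose_mat V) = U * Sg * ((transpose_mat V * S) * transpose_mat V)"
    using Aeq assoc_mult_mat[OF US tV mult_carrier_mat[OF S tV]] assoc_mult_mat[OF tV S tV] by simp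
  hence AS: "A * (S * transpose_mat V) = 0\<^sub>m m n" using VS US tV right_mult_zero_mat[OF US] by simp
  have "A * Z = A * (pinv A * A) + A * (S * transpose_mat V)"
    unfolding Z_def using mult_add_distrib_mat[OF A mult_carrier_mat[OF pAc A] mult_carrier_mat[OF S tV]] .
  also have "A * (pinv A * A) = A" using pA assoc_mult_mat[OF A pAc A] unfolding is_pinv_def by simp
  finally have AZ: "A * Z = A" using AS A by simp
  have "X - E = A" using X A E by (auto intro!: eq_matI)
  hence "rlrr_feasible m n X Z E" unfolding rlrr_feasible_def using Zc E AZ by simp
  moreover have "mrank Z \<le> r" using mrank_mult_le_inner_dim[OF W tV] Zeq by simp
  ultimately show ?thesis unfolding Z_def r_def ..
qed

lemma rlrr_opt_if_rpca_opt:
  assumes X: "X \<in> carrier_mat m n" and opt: "rpca_opt m n X lam f A E"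
    and svd: "skinny_svd m n A U Sg V" and S: "S \<in> carrier_mat n (mrank A)"
    and VS: "transpose_mat V * S = 0\<^sub>m (mrank A) (mrank A)"
  shows "rlrr_opt m n X lam f (pinv A * A + S * transpose_mat V) E"
  unfolding rlrr_opt_def
proof (intro conjI allI impI)
  have feas: "rpca_feasible m n X A E" using opt unfolding rpca_opt_def by simp
  note Z = skinny_svd_rlrr_feasible[OF feas svd S VS]
  show "rlrr_feasible m n X (pinv A * A + S * transpose_mat V) E" using Z by simp
  fix Z' E' assume "rlrr_feasible m n X Z' E'"
  hence "rpca_feasible m n X (X - E') E'" "mrank (X - E') \<le> mrank Z'"
    using rlrr_feasible_imp_rpca_feasible[OF X] by blast+
  thus "real (mrank (pinv A * A + S * transpose_mat V)) + lam * f E \<le> real (mrank Z') + lam * f E'"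
    using opt Z unfolding rpca_opt_def by force
qed

theorem theorem1:
  fixes m n :: nat and X :: "real mat" and lam :: real and f :: "real mat \<Rightarrow> real"
  assumes "X \<in> carrier_mat m n" and "lam > 0"
  shows "(\<forall>A E U Sg V S. rpca_opt m n X lam f A E \<and> skinny_svd m n A U Sg V \<and>
            S \<in> carrier_mat n (mrank A) \<and>
            transpose_mat V * S = 0\<^sub>m (mrank A) (mrank A) \<longrightarrow>
            rlrr_opt m n X lam f (pinv A * A + S * transpose_mat V) E)
       \<and> (\<forall>Z E. rlrr_opt m n X lam f Z E \<longrightarrow> rpca_opt m n X lam f (X - E) E)"
  using rlrr_opt_if_rpca_opt[OF assms(1)] rpca_opt_if_rlrr_opt[OF assms(1)] by blast

end
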